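(* Let $n\ge 2$ and $m\in\mathbb{N}$. The sequence \[ \big(t_2^m-t_1^m,\ t_3^m-t_2^m,\ \dots,\ t_{n-1}^m-t_{n-2}^m,\ -t_1^m\cdots t_{n-2}^m\,t_{n-1}^{2m}\big) \] is a regular sequence in $\mathbb{Q}[t_1,\dots,t_{n-1}]$. *)

theory Defs
  imports Complex_Main "HOL-Library.Poly_Mapping"
begin

text \<open>Multivariate polynomials over a ring: finitely supported maps from monomials
  (finitely supported exponent vectors \<open>nat \<Rightarrow>\<^sub>0 nat\<close>, variable \<open>i\<close> is \<open>t_i\<close>)
  to coefficients.\<close>
type_synonym 'a mpoly = "(nat \<Rightarrow>\<^sub>0 nat) \<Rightarrow>\<^sub>0 'a"

definition var :: "nat \<Rightarrow> 'a::comm_ring_1 mpoly" where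
  "var i = Poly_Mapping.single (Poly_Mapping.single i 1) 1"

definition poly_ring :: "nat set \<Rightarrow> 'a::comm_ring_1 mpoly set" where
  "poly_ring V = {p :: 'a mpoly. \<forall>mon \<in> Poly_Mapping.keys p. Poly_Mapping.keys mon \<subseteq> V}"

definition ideal_gen :: "'a::comm_ring_1 set \<Rightarrow> 'a list \<Rightarrow> 'a set" where
  "ideal_gen R fs = {(\<Sum>i<length fs. c i * fs ! i) | c. \<forall>i. c i \<in> R}"

definition regular_sequence :: "'a::comm_ring_1 set \<Rightarrow> 'a list \<Rightarrow> bool" where
  "regular_sequence R fs \<longleftrightarrow>
     set fs \<subseteq> R \<and>
     (\<forall>i < length fs. \<forall>g \<in> R.
        fs ! i * g \<in> ideal_gen R (take i fs) \<longrightarrow> g \<in> ideal_gen R (take i fs)) \<and>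
     1 \<notin> ideal_gen R fs"

end

theory Submission
  imports Defs
begin

text \<open>Write \<open>I\<^sub>J\<close> for the ideal generated by \<open>t\<^sub>2\<^sup>m - t\<^sub>1\<^sup>m, \<dots>, t\<^sub>J\<^sup>m - t\<^sub>J\<^sub>-\<^sub>1\<^sup>m\<close>.
  Modulo \<open>I\<^sub>J\<close> every \<open>t\<^sub>l\<^sup>m\<close> with \<open>l \<le> J\<close> may be replaced by \<open>t\<^sub>1\<^sup>m\<close>, so each monomial is
  congruent to the one whose exponents of \<open>t\<^sub>2, \<dots>, t\<^sub>J\<close> are reduced modulo \<open>m\<close>, the excess
  being moved onto \<open>t\<^sub>1\<close>. The linear extension \<open>N\<^sub>J\<close> of this reduction kills \<open>I\<^sub>J\<close>, and
  \<open>p - N\<^sub>J p \<in> I\<^sub>J\<close>; hence \<open>p \<in> I\<^sub>J\<close> iff \<open>N\<^sub>J p = 0\<close>. Under \<open>N\<^sub>J\<close>, multiplication by \<open>t\<^sub>l\<^sup>m\<close>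
  (\<open>l \<le> J\<close>) becomes multiplication by \<open>t\<^sub>1\<^sup>m\<close>, while \<open>t\<^sub>J\<^sub>+\<^sub>1\<close> is left alone. So
  \<open>N\<^sub>J((t\<^sub>J\<^sub>+\<^sub>1\<^sup>m - t\<^sub>J\<^sup>m) g) = (t\<^sub>J\<^sub>+\<^sub>1\<^sup>m - t\<^sub>1\<^sup>m) N\<^sub>J g\<close> and \<open>N\<^sub>n\<^sub>-\<^sub>1(f g) = -t\<^sub>1\<^sup>m\<^sup>n N\<^sub>n\<^sub>-\<^sub>1 g\<close> for the last
  element \<open>f\<close>; as the polynomial ring is a domain, each element is a non-zerodivisor modulo
  the ideal of its predecessors. The ideal is proper since all generators vanish at the origin.\<close>

abbreviation lookup :: "('a \<Rightarrow>\<^sub>0 'b::zero) \<Rightarrow> 'a \<Rightarrow> 'b" where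
  "lookup \<equiv> Poly_Mapping.lookup"
abbreviation single :: "'a \<Rightarrow> 'b \<Rightarrow> 'a \<Rightarrow>\<^sub>0 'b::zero" where
  "single \<equiv> Poly_Mapping.single"
abbreviation keys :: "('a \<Rightarrow>\<^sub>0 'b::zero) \<Rightarrow> 'a set" where
  "keys \<equiv> Poly_Mapping.keys"

lemma var_power: "(var i :: 'a::comm_ring_1 mpoly) ^ k = single (single i k) 1"
  by (induction k) (simp_all add: var_def mult_single single_add[symmetric] add.commute)

lemma var_nonzero: "(var i :: 'a::comm_ring_1 mpoly) \<noteq> 0"
  unfolding var_def by (metis lookup_single_eq lookup_zero one_neq_zero)

lemma var_power_diff_nonzero:
  assumes "i \<noteq> k" "m > 0"
  shows "(var i ^ m - var k ^ m :: 'a::comm_ring_1 mpoly) \<noteq> 0"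
proof -
  have "single k m \<noteq> single i m"
    using assms by (metis lookup_single_eq lookup_single_not_eq neq0_conv)
  then have "lookup (var i ^ m - var k ^ m :: 'a mpoly) (single i m) = 1"
    by (simp add: var_power lookup_minus lookup_single)
  then show ?thesis
    by auto
qed

lemma lookup_var_power_zero:
  assumes "m > 0"
  shows "lookup (var i ^ m :: 'a::comm_ring_1 mpoly) 0 = 0"
proof -
  have "single i m \<noteq> 0"
    using assms by (metis lookup_single_eq lookup_zero neq0_conv)
  then show ?thesis
    by (simp add: var_power lookup_single when_def)
qed

lemma sum_single_lookup: "(\<Sum>e\<in>keys p. single e (lookup p e)) = p"
  by (rule poly_mapping_eqI) (auto simp: lookup_sum lookup_single when_def in_keys_iff)

lemma lookup_mult_zero:
  fixes p q :: "('n \<Rightarrow>\<^sub>0 nat) \<Rightarrow>\<^sub>0 'a::comm_semiring_1"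
  shows "lookup (p * q) 0 = lookup p 0 * lookup q 0"
proof -
  have sum_eq_zero: "(a::'n \<Rightarrow>\<^sub>0 nat) + b = 0 \<longleftrightarrow> a = 0 \<and> b = 0" for a b
    by (metis add_eq_0_iff_both_eq_0 lookup_add lookup_zero poly_mapping_eqI)
  have "Sum_any (\<lambda>b. lookup q b when 0 = a + b) = (lookup q 0 when a = 0)" for a
    by (cases "a = 0") (simp_all add: when_def sum_eq_zero)
  then show ?thesis
    by (simp add: lookup_mult mult_when)
qed

locale subring =
  fixes R :: "'a::comm_ring_1 set"
  assumes zero_mem: "0 \<in> R"
    and one_mem: "1 \<in> R"
    and add_mem: "x \<in> R \<Longrightarrow> y \<in> R \<Longrightarrow> x + y \<in> R"
    and uminus_mem: "x \<in> R \<Longrightarrow> - x \<in> R"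
    and mult_mem: "x \<in> R \<Longrightarrow> y \<in> R \<Longrightarrow> x * y \<in> R"
begin

lemma diff_mem: "x \<in> R \<Longrightarrow> y \<in> R \<Longrightarrow> x - y \<in> R"
  using add_mem[of x "- y"] uminus_mem[of y] by simp

lemma prod_mem: "(\<And>i. i \<in> A \<Longrightarrow> f i \<in> R) \<Longrightarrow> prod f A \<in> R"
  by (induction A rule: infinite_finite_induct) (auto intro: one_mem mult_mem)

lemma ideal_genI: "(\<And>i. c i \<in> R) \<Longrightarrow> (\<Sum>i<length fs. c i * fs ! i) \<in> ideal_gen R fs"
  unfolding ideal_gen_def by blast

lemma ideal_gen_zero: "0 \<in> ideal_gen R fs"
  using ideal_genI[of "\<lambda>_. 0" fs] by (simp add: zero_mem)

lemma ideal_gen_add: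
  assumes "a \<in> ideal_gen R fs" "b \<in> ideal_gen R fs"
  shows "a + b \<in> ideal_gen R fs"
proof -
  obtain c d where "a = (\<Sum>i<length fs. c i * fs ! i)" "b = (\<Sum>i<length fs. d i * fs ! i)"
    and "\<forall>i. c i \<in> R" "\<forall>i. d i \<in> R"
    using assms unfolding ideal_gen_def by blast
  then show ?thesis
    using ideal_genI[of "\<lambda>i. c i + d i" fs] by (simp add: add_mem sum.distrib distrib_right)
qed

lemma ideal_gen_mult:
  assumes "r \<in> R" "a \<in> ideal_gen R fs"
  shows "r * a \<in> ideal_gen R fs"
proof -
  obtain c where "a = (\<Sum>i<length fs. c i * fs ! i)" "\<forall>i. c i \<in> R"
    using assms(2) unfolding ideal_gen_def by blast
  then show ?thesis
    using ideal_genI[of "\<lambda>i. r * c i" fs] assms(1)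
    by (simp add: mult_mem sum_distrib_left mult.assoc)
qed

lemma ideal_gen_sum: "(\<And>i. i \<in> A \<Longrightarrow> h i \<in> ideal_gen R fs) \<Longrightarrow> (\<Sum>i\<in>A. h i) \<in> ideal_gen R fs"
  by (induction A rule: infinite_finite_induct) (auto simp: ideal_gen_zero ideal_gen_add)

lemma nth_mem_ideal_gen:
  assumes "k < length fs"
  shows "fs ! k \<in> ideal_gen R fs"
proof -
  have "{..<length fs} \<inter> {i. i = k} = {k}"
    using assms by auto
  then show ?thesis
    using ideal_genI[of "\<lambda>i. of_bool (i = k)" fs] by (simp add: zero_mem one_mem)
qed

end

lemma poly_ring_single: "keys e \<subseteq> V \<Longrightarrow> single e c \<in> poly_ring V"
  unfolding poly_ring_def by auto

lemma var_power_mem_poly_ring: "i \<in> V \<Longrightarrow> var i ^ k \<in> poly_ring V"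
  unfolding var_power by (rule poly_ring_single) auto

interpretation poly_ring: subring "poly_ring V" for V
proof
  show "p + q \<in> poly_ring V" if "p \<in> poly_ring V" "q \<in> poly_ring V" for p q :: "'a mpoly"
    using that keys_add[of p q] unfolding poly_ring_def by blast
  show "p * q \<in> poly_ring V" if "p \<in> poly_ring V" "q \<in> poly_ring V" for p q :: "'a mpoly"
    unfolding poly_ring_def
  proof (intro CollectI ballI)
    fix e assume "e \<in> keys (p * q)"
    then obtain a b where "e = a + b" "a \<in> keys p" "b \<in> keys q"
      using keys_mult by blast
    with that show "keys e \<subseteq> V"
      unfolding poly_ring_def using keys_add[of a b] by blast
  qed
qed (auto simp: poly_ring_def)

lemma one_notin_ideal_gen:
  fixes fs :: "(('n \<Rightarrow>\<^sub>0 nat) \<Rightarrow>\<^sub>0 'a::comm_ring_1) list"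
  assumes "\<forall>f \<in> set fs. lookup f 0 = 0"
  shows "1 \<notin> ideal_gen R fs"
proof
  assume "1 \<in> ideal_gen R fs"
  then obtain c where c: "1 = (\<Sum>i<length fs. c i * fs ! i)"
    unfolding ideal_gen_def by blast
  have "lookup (\<Sum>i<length fs. c i * fs ! i) 0 = (\<Sum>i<length fs. lookup (c i) 0 * lookup (fs ! i) 0)"
    by (simp add: lookup_sum lookup_mult_zero)
  also have "\<dots> = 0"
    using assms by simp
  finally show False
    by (simp flip: c)
qed

lemma regular_sequence_snocI:
  assumes "regular_sequence R fs" "f \<in> R"
    and "\<forall>g \<in> R. f * g \<in> ideal_gen R fs \<longrightarrow> g \<in> ideal_gen R fs"
    and "1 \<notin> ideal_gen R (fs @ [f])"
  shows "regular_sequence R (fs @ [f])"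
  unfolding regular_sequence_def
proof (intro conjI allI impI ballI)
  show "set (fs @ [f]) \<subseteq> R"
    using assms(1,2) unfolding regular_sequence_def by simp
next
  fix i g
  assume "i < length (fs @ [f])" "g \<in> R" "(fs @ [f]) ! i * g \<in> ideal_gen R (take i (fs @ [f]))"
  then show "g \<in> ideal_gen R (take i (fs @ [f]))"
    using assms(1,3) unfolding regular_sequence_def
    by (cases "i < length fs") (auto simp: nth_append)
qed (fact assms(4))

definition map_monomials :: "('m \<Rightarrow> 'n) \<Rightarrow> ('m \<Rightarrow>\<^sub>0 'a::comm_monoid_add) \<Rightarrow> 'n \<Rightarrow>\<^sub>0 'a" where
  "map_monomials \<nu> p = (\<Sum>e\<in>keys p. single (\<nu> e) (lookup p e))"

lemma map_monomials_superset:
  assumes "finite A" "keys p \<subseteq> A"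
  shows "map_monomials \<nu> p = (\<Sum>e\<in>A. single (\<nu> e) (lookup p e))"
  unfolding map_monomials_def
  by (rule sum.mono_neutral_left) (use assms in \<open>auto simp: not_in_keys_iff_lookup_eq_zero\<close>)

lemma map_monomials_add: "map_monomials \<nu> (p + q) = map_monomials \<nu> p + map_monomials \<nu> q"
proof -
  let ?A = "keys p \<union> keys q"
  have "map_monomials \<nu> (p + q) = (\<Sum>e\<in>?A. single (\<nu> e) (lookup (p + q) e))"
    using keys_add[of p q] by (intro map_monomials_superset) auto
  also have "\<dots> = (\<Sum>e\<in>?A. single (\<nu> e) (lookup p e)) + (\<Sum>e\<in>?A. single (\<nu> e) (lookup q e))"
    by (simp add: lookup_add single_add sum.distrib)
  also have "\<dots> = map_monomials \<nu> p + map_monomials \<nu> q"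
    by (subst (1 2) map_monomials_superset[of ?A]) auto
  finally show ?thesis .
qed

lemma map_monomials_zero [simp]: "map_monomials \<nu> 0 = 0"
  by (simp add: map_monomials_def)

lemma map_monomials_sum: "map_monomials \<nu> (\<Sum>i\<in>I. h i) = (\<Sum>i\<in>I. map_monomials \<nu> (h i))"
  by (induction I rule: infinite_finite_induct) (auto simp: map_monomials_add)

lemma map_monomials_uminus:
  "map_monomials \<nu> (- p :: 'm \<Rightarrow>\<^sub>0 'a::ab_group_add) = - map_monomials \<nu> p"
  by (simp add: map_monomials_def single_uminus sum_negf)

lemma map_monomials_diff:
  "map_monomials \<nu> (p - q :: 'm \<Rightarrow>\<^sub>0 'a::ab_group_add) = map_monomials \<nu> p - map_monomials \<nu> q"
  using map_monomials_add[of \<nu> p "- q"] by (simp add: map_monomials_uminus)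

lemma map_monomials_single: "map_monomials \<nu> (single e c) = single (\<nu> e) c"
  by (subst map_monomials_superset[of "{e}"]) (auto simp: lookup_single)

lemma map_monomials_single_mult:
  fixes p :: "'m::monoid_add \<Rightarrow>\<^sub>0 'a::semiring_0"
  assumes "\<And>e. \<nu> (a + e) = b + \<nu> e"
  shows "map_monomials \<nu> (single a c * p) = single b c * map_monomials \<nu> p"
proof -
  have "map_monomials \<nu> (single a c * p) = map_monomials \<nu> (\<Sum>e\<in>keys p. single (a + e) (c * lookup p e))"
    by (subst (1) sum_single_lookup[of p, symmetric]) (simp add: sum_distrib_left mult_single)
  also have "\<dots> = (\<Sum>e\<in>keys p. single b c * single (\<nu> e) (lookup p e))"
    by (simp add: map_monomials_sum map_monomials_single assms mult_single)
  also have "\<dots> = single b c * map_monomials \<nu> p"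
    by (simp add: map_monomials_def sum_distrib_left)
  finally show ?thesis .
qed

section \<open>Normal form modulo the binomials\<close>

text \<open>\<open>reduce_monomial m J e\<close> is the normal form of the monomial \<open>e\<close> modulo the relations
  \<open>t\<^sub>l\<^sup>m = t\<^sub>1\<^sup>m\<close> (\<open>2 \<le> l \<le> J\<close>).\<close>

definition excess :: "nat \<Rightarrow> nat \<Rightarrow> (nat \<Rightarrow>\<^sub>0 nat) \<Rightarrow> nat" where
  "excess m J e = (\<Sum>l=2..J. lookup e l div m)"

definition reduce_monomial :: "nat \<Rightarrow> nat \<Rightarrow> (nat \<Rightarrow>\<^sub>0 nat) \<Rightarrow> nat \<Rightarrow>\<^sub>0 nat" where
  "reduce_monomial m J e = Abs_poly_mapping (\<lambda>i.
     if i = 1 then lookup e 1 + m * excess m J e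
     else if 2 \<le> i \<and> i \<le> J then lookup e i mod m
     else lookup e i)"

abbreviation binomial_nf :: "nat \<Rightarrow> nat \<Rightarrow> 'a::comm_ring_1 mpoly \<Rightarrow> 'a mpoly" where
  "binomial_nf m J \<equiv> map_monomials (reduce_monomial m J)"

lemma lookup_reduce_monomial:
  "lookup (reduce_monomial m J e) = (\<lambda>i.
     if i = 1 then lookup e 1 + m * excess m J e
     else if 2 \<le> i \<and> i \<le> J then lookup e i mod m
     else lookup e i)" (is "_ = ?r")
proof -
  have "{i. ?r i \<noteq> 0} \<subseteq> insert 1 (keys e)"
    by (auto simp: in_keys_iff)
  then have "finite {i. ?r i \<noteq> 0}"
    by (rule finite_subset) simp
  then show ?thesis
    unfolding reduce_monomial_def by simp
qed

lemma excess_add_single_inside: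
  assumes "2 \<le> i" "i \<le> J" "m > 0"
  shows "excess m J (single i m + e) = excess m J e + 1"
proof -
  have "excess m J (single i m + e) = (\<Sum>l=2..J. lookup e l div m + (if l = i then 1 else 0))"
    unfolding excess_def using assms by (intro sum.cong) (auto simp: lookup_add lookup_single)
  also have "\<dots> = excess m J e + 1"
    using assms by (simp add: sum.distrib excess_def)
  finally show ?thesis .
qed

lemma excess_add_single_outside:
  assumes "\<not> (2 \<le> i \<and> i \<le> J)"
  shows "excess m J (single i a + e) = excess m J e"
  unfolding excess_def using assms by (intro sum.cong) (auto simp: lookup_add lookup_single)

lemma reduce_monomial_add_single_inside:
  assumes "1 \<le> i" "i \<le> J" "m > 0"
  shows "reduce_monomial m J (single i m + e) = single 1 m + reduce_monomial m J e"
proof (cases "i = 1")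
  case True
  then show ?thesis
    by (intro poly_mapping_eqI)
      (auto simp: lookup_reduce_monomial lookup_add lookup_single excess_add_single_outside)
next
  case False
  with assms show ?thesis
    by (intro poly_mapping_eqI)
      (auto simp: lookup_reduce_monomial lookup_add lookup_single excess_add_single_inside when_def)
qed

lemma reduce_monomial_add_single_outside:
  assumes "\<not> (2 \<le> i \<and> i \<le> J)"
  shows "reduce_monomial m J (single i a + e) = single i a + reduce_monomial m J e"
  using assms
  by (intro poly_mapping_eqI)
    (auto simp: lookup_reduce_monomial lookup_add lookup_single excess_add_single_outside)

lemma reduce_monomial_eq_self:
  assumes "excess m J e = 0"
  shows "reduce_monomial m J e = e"
proof (rule poly_mapping_eqI)
  fix i
  have "lookup e l mod m = lookup e l" if "2 \<le> l" "l \<le> J" for l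
  proof -
    have "lookup e l div m = 0"
      using assms that by (simp add: excess_def)
    then show ?thesis
      using div_mult_mod_eq[of "lookup e l" m] by simp
  qed
  then show "lookup (reduce_monomial m J e) i = lookup e i"
    using assms by (simp add: lookup_reduce_monomial)
qed

lemma excess_pos_split:
  assumes "excess m J e \<noteq> 0"
  obtains i e' where "2 \<le> i" "i \<le> J" "e = single i m + e'" "keys e' \<subseteq> keys e"
proof -
  have "\<exists>i\<in>{2..J}. lookup e i div m \<noteq> 0"
    using assms unfolding excess_def by (meson sum.neutral)
  then obtain i where i: "2 \<le> i" "i \<le> J" "lookup e i div m \<noteq> 0"
    by auto
  then have "m \<le> lookup e i"
    by (simp add: div_eq_0_iff)
  then have "e = single i m + (e - single i m)"
    by (intro poly_mapping_eqI) (auto simp: lookup_add lookup_minus lookup_single when_def)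
  moreover have "keys (e - single i m) \<subseteq> keys e"
    by (auto simp: in_keys_iff lookup_minus)
  ultimately show ?thesis
    using i that by blast
qed

lemma binomial_nf_var_power_mult_inside:
  assumes "1 \<le> i" "i \<le> J" "m > 0"
  shows "binomial_nf m J (var i ^ m * g) = var 1 ^ m * binomial_nf m J g"
  unfolding var_power
  by (rule map_monomials_single_mult) (rule reduce_monomial_add_single_inside[OF assms])

lemma binomial_nf_var_power_mult_outside:
  assumes "\<not> (2 \<le> i \<and> i \<le> J)"
  shows "binomial_nf m J (var i ^ k * g) = var i ^ k * binomial_nf m J g"
  unfolding var_power
  by (rule map_monomials_single_mult) (rule reduce_monomial_add_single_outside[OF assms])

lemma binomial_nf_prod_var_power_mult:
  assumes "finite A" "A \<subseteq> {1..J}" "m > 0"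
  shows "binomial_nf m J ((\<Prod>l\<in>A. var l ^ m) * g) = var 1 ^ (m * card A) * binomial_nf m J g"
  using assms
proof (induction A rule: finite_induct)
  case (insert x A)
  then have "binomial_nf m J ((\<Prod>l\<in>insert x A. var l ^ m) * g)
      = var 1 ^ m * binomial_nf m J ((\<Prod>l\<in>A. var l ^ m) * g)"
    by (simp add: mult.assoc binomial_nf_var_power_mult_inside)
  with insert show ?case
    by (simp add: power_add mult.assoc)
qed simp

text \<open>\<open>binomials m j\<close> lists \<open>t\<^sub>2\<^sup>m - t\<^sub>1\<^sup>m, \<dots>, t\<^sub>j\<^sub>+\<^sub>1\<^sup>m - t\<^sub>j\<^sup>m\<close>, so its normal form is
  \<open>binomial_nf m (j + 1)\<close>.\<close>

definition binomials :: "nat \<Rightarrow> nat \<Rightarrow> 'a::comm_ring_1 mpoly list" where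
  "binomials m j = map (\<lambda>i. var (i + 1) ^ m - var i ^ m) [1..<j + 1]"

lemma length_binomials [simp]: "length (binomials m j) = j"
  by (simp add: binomials_def)

lemma nth_binomials: "i < j \<Longrightarrow> binomials m j ! i = var (i + 2) ^ m - var (i + 1) ^ m"
  by (simp add: binomials_def del: upt_Suc)

lemma take_binomials: "i \<le> j \<Longrightarrow> take i (binomials m j) = binomials m i"
  by (simp add: binomials_def take_map del: upt_Suc)

lemma binomial_nf_ideal_gen_binomials:
  assumes "m > 0" "p \<in> ideal_gen R (binomials m j)"
  shows "binomial_nf m (j + 1) p = 0"
proof -
  obtain c where c: "p = (\<Sum>i<j. c i * binomials m j ! i)"
    using assms(2) unfolding ideal_gen_def by auto
  have "binomial_nf m (j + 1) (c i * binomials m j ! i) = 0" if "i < j" for i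
  proof -
    have "c i * binomials m j ! i = var (i + 2) ^ m * c i - var (i + 1) ^ m * c i"
      using that by (simp add: nth_binomials algebra_simps)
    with that assms(1) show ?thesis
      by (simp add: map_monomials_diff binomial_nf_var_power_mult_inside)
  qed
  then show ?thesis
    unfolding c by (simp add: map_monomials_sum)
qed

lemma var_power_diff_mem_ideal_gen_binomials:
  assumes "d \<le> j"
  shows "(var (d + 1) ^ m - var 1 ^ m :: 'a::comm_ring_1 mpoly) \<in> ideal_gen (poly_ring V) (binomials m j)"
  using assms
proof (induction d)
  case 0
  then show ?case by (simp add: poly_ring.ideal_gen_zero)
next
  case (Suc d)
  then have "binomials m j ! d + (var (d + 1) ^ m - var 1 ^ m :: 'a mpoly) \<in> ideal_gen (poly_ring V) (binomials m j)"
    by (intro poly_ring.ideal_gen_add poly_ring.nth_mem_ideal_gen) auto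
  with Suc.prems show ?case
    by (simp add: nth_binomials)
qed

lemma monomial_diff_reduce_mem_ideal_gen_binomials:
  assumes "m > 0" "1 \<in> V" "keys e \<subseteq> V"
  shows "(single e 1 - single (reduce_monomial m (j + 1) e) 1 :: 'a::comm_ring_1 mpoly)
    \<in> ideal_gen (poly_ring V) (binomials m j)"
  using assms(3)
proof (induction "excess m (j + 1) e" arbitrary: e rule: less_induct)
  case less
  show ?case
  proof (cases "excess m (j + 1) e = 0")
    case True
    then show ?thesis
      by (simp add: reduce_monomial_eq_self poly_ring.ideal_gen_zero)
  next
    case False
    then obtain i e' where i: "2 \<le> i" "i \<le> j + 1" and e: "e = single i m + e'"
      and keys_e': "keys e' \<subseteq> keys e"
      by (rule excess_pos_split)
    define e'' where "e'' = single 1 m + e'"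
    have "keys (single 1 m) \<subseteq> V"
      using assms(2) by simp
    then have keys_e'': "keys e'' \<subseteq> V"
      using keys_e' less.prems keys_add[of "single 1 m" e'] unfolding e''_def by blast
    have "excess m (j + 1) e'' < excess m (j + 1) e"
      using i assms(1) by (simp add: e e''_def excess_add_single_inside excess_add_single_outside)
    then have IH: "(single e'' 1 - single (reduce_monomial m (j + 1) e'') 1 :: 'a mpoly)
        \<in> ideal_gen (poly_ring V) (binomials m j)"
      using less.hyps keys_e'' by blast
    have reduce_e'': "reduce_monomial m (j + 1) e'' = reduce_monomial m (j + 1) e"
      using i assms(1)
      by (simp add: e e''_def reduce_monomial_add_single_inside reduce_monomial_add_single_outside)
    have "(var (i - 1 + 1) ^ m - var 1 ^ m :: 'a mpoly) \<in> ideal_gen (poly_ring V) (binomials m j)"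
      using i by (intro var_power_diff_mem_ideal_gen_binomials) simp
    with i have "single e' 1 * (var i ^ m - var 1 ^ m :: 'a mpoly) \<in> ideal_gen (poly_ring V) (binomials m j)"
      using keys_e' less.prems by (intro poly_ring.ideal_gen_mult poly_ring_single) auto
    moreover have "single e 1 - single e'' 1 = single e' 1 * (var i ^ m - var 1 ^ m :: 'a mpoly)"
      by (simp add: e e''_def var_power mult_single right_diff_distrib add.commute)
    ultimately have "(single e 1 - single e'' 1 :: 'a mpoly) \<in> ideal_gen (poly_ring V) (binomials m j)"
      by simp
    from poly_ring.ideal_gen_add[OF this IH] show ?thesis
      using reduce_e'' by simp
  qed
qed

lemma mem_ideal_gen_binomials_iff:
  assumes "m > 0" "1 \<in> V" "p \<in> poly_ring V"
  shows "p \<in> ideal_gen (poly_ring V) (binomials m j) \<longleftrightarrow> binomial_nf m (j + 1) p = 0"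
proof
  assume "binomial_nf m (j + 1) p = 0"
  have "p - binomial_nf m (j + 1) p
      = (\<Sum>e\<in>keys p. single 0 (lookup p e) * (single e 1 - single (reduce_monomial m (j + 1) e) 1))"
    by (subst (1) sum_single_lookup[of p, symmetric])
      (simp add: map_monomials_def sum_subtractf[symmetric] right_diff_distrib mult_single)
  also have "\<dots> \<in> ideal_gen (poly_ring V) (binomials m j)"
    using assms(1,2) assms(3)[unfolded poly_ring_def]
    by (intro poly_ring.ideal_gen_sum poly_ring.ideal_gen_mult poly_ring_single
        monomial_diff_reduce_mem_ideal_gen_binomials) auto
  finally show "p \<in> ideal_gen (poly_ring V) (binomials m j)"
    using \<open>binomial_nf m (j + 1) p = 0\<close> by simp
qed (use assms binomial_nf_ideal_gen_binomials in blast)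

lemma nonzerodivisor_mod_binomials:
  fixes f u :: "'a::idom mpoly"
  assumes "m > 0" "1 \<in> V" "f \<in> poly_ring V" "u \<noteq> 0"
    and "\<And>h. binomial_nf m (j + 1) (f * h) = u * binomial_nf m (j + 1) h"
  shows "\<forall>g \<in> poly_ring V. f * g \<in> ideal_gen (poly_ring V) (binomials m j) \<longrightarrow>
           g \<in> ideal_gen (poly_ring V) (binomials m j)"
proof (intro ballI impI)
  fix g assume g: "g \<in> poly_ring V" and "f * g \<in> ideal_gen (poly_ring V) (binomials m j)"
  then have "u * binomial_nf m (j + 1) g = 0"
    using assms poly_ring.mult_mem mem_ideal_gen_binomials_iff by metis
  with assms(1,2,4) g show "g \<in> ideal_gen (poly_ring V) (binomials m j)"
    by (simp add: mem_ideal_gen_binomials_iff)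
qed

lemma binomial_nf_next_binomial_mult:
  assumes "m > 0"
  shows "binomial_nf m (i + 1) ((var (i + 2) ^ m - var (i + 1) ^ m) * h)
           = (var (i + 2) ^ m - var 1 ^ m) * binomial_nf m (i + 1) h"
  using assms
  by (simp add: left_diff_distrib map_monomials_diff binomial_nf_var_power_mult_inside
      binomial_nf_var_power_mult_outside)

lemma regular_sequence_binomials:
  assumes "m > 0" "{1..j + 1} \<subseteq> V"
  shows "regular_sequence (poly_ring V) (binomials m j :: 'a::idom mpoly list)"
  unfolding regular_sequence_def
proof (intro conjI allI impI ballI)
  show "set (binomials m j :: 'a mpoly list) \<subseteq> poly_ring V"
    using assms(2) by (auto simp: binomials_def intro!: poly_ring.diff_mem var_power_mem_poly_ring)
  show "1 \<notin> ideal_gen (poly_ring V) (binomials m j :: 'a mpoly list)"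
    using assms(1) by (intro one_notin_ideal_gen) (auto simp: binomials_def lookup_minus lookup_var_power_zero)
next
  fix i and g :: "'a mpoly"
  assume i: "i < length (binomials m j)" and g: "g \<in> poly_ring V"
    and fg: "binomials m j ! i * g \<in> ideal_gen (poly_ring V) (take i (binomials m j))"
  have f_mem: "var (i + 2) ^ m - var (i + 1) ^ m \<in> (poly_ring V :: 'a mpoly set)"
    using assms(2) i by (intro poly_ring.diff_mem var_power_mem_poly_ring) auto
  have u_nonzero: "(var (i + 2) ^ m - var 1 ^ m :: 'a mpoly) \<noteq> 0"
    using assms(1) by (intro var_power_diff_nonzero) auto
  have "\<forall>g \<in> poly_ring V. (var (i + 2) ^ m - var (i + 1) ^ m :: 'a mpoly) * g \<in> ideal_gen (poly_ring V) (binomials m i)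
      \<longrightarrow> g \<in> ideal_gen (poly_ring V) (binomials m i)"
    using assms(2)
    by (intro nonzerodivisor_mod_binomials[OF assms(1) _ f_mem u_nonzero]
        binomial_nf_next_binomial_mult[OF assms(1)]) auto
  with i g fg show "g \<in> ideal_gen (poly_ring V) (take i (binomials m j))"
    by (simp add: take_binomials nth_binomials)
qed

lemma binomial_nf_monomial_mult:
  assumes "m > 0"
  shows "binomial_nf m (j + 1) ((\<Prod>i=1..j. var i ^ m) * var (j + 1) ^ (2 * m) * h)
           = var 1 ^ (m * (j + 2)) * binomial_nf m (j + 1) h"
proof -
  have "binomial_nf m (j + 1) ((\<Prod>i=1..j. var i ^ m) * var (j + 1) ^ (2 * m) * h)
      = binomial_nf m (j + 1) ((\<Prod>i=1..j. var i ^ m) * (var (j + 1) ^ m * (var (j + 1) ^ m * h)))"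
    by (simp add: mult_2 power_add mult.assoc)
  also have "\<dots> = var 1 ^ (m * j) * (var 1 ^ m * (var 1 ^ m * binomial_nf m (j + 1) h))"
    using assms by (simp add: binomial_nf_prod_var_power_mult binomial_nf_var_power_mult_inside)
  finally show ?thesis
    by (simp add: power_add mult.assoc)
qed

theorem lemma3p5:
  fixes n m :: nat
  assumes "n \<ge> 2" and "m \<ge> 1"
  shows "regular_sequence (poly_ring {1..n-1} :: rat mpoly set)
           (map (\<lambda>i. var (i+1) ^ m - var i ^ m) [1..<n-1] @
            [- ((\<Prod>i=1..n-2. var i ^ m) * var (n-1) ^ (2*m))])"
proof -
  obtain j where n: "n = j + 2"
    using assms(1) by (metis add.commute le_add_diff_inverse)
  have m: "m > 0"
    using assms(2) by simp
  let ?R = "poly_ring {1..j + 1} :: rat mpoly set"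
  let ?f = "- ((\<Prod>i=1..j. var i ^ m) * var (j + 1) ^ (2 * m)) :: rat mpoly"
  have "regular_sequence ?R (binomials m j)"
    using m by (rule regular_sequence_binomials) simp
  moreover have "?f \<in> ?R"
    by (intro poly_ring.uminus_mem poly_ring.mult_mem poly_ring.prod_mem var_power_mem_poly_ring) auto
  moreover have "\<forall>g \<in> ?R. ?f * g \<in> ideal_gen ?R (binomials m j) \<longrightarrow> g \<in> ideal_gen ?R (binomials m j)"
  proof (rule nonzerodivisor_mod_binomials[OF m _ \<open>?f \<in> ?R\<close>])
    show "binomial_nf m (j + 1) (?f * h) = - (var 1 ^ (m * (j + 2))) * binomial_nf m (j + 1) h" for h
      using binomial_nf_monomial_mult[OF m, of j h] by (simp add: map_monomials_uminus)
  qed (simp_all add: var_nonzero)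
  moreover have "1 \<notin> ideal_gen ?R (binomials m j @ [?f])"
    using m by (intro one_notin_ideal_gen)
      (auto simp: binomials_def lookup_minus lookup_var_power_zero lookup_mult_zero)
  ultimately show ?thesis
    unfolding n by (simp add: binomials_def regular_sequence_snocI)
qed

end
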